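(* Let $n$ be even and let $f,g:\mathbb{F}_2^n\to\mathbb{F}_2$ be bent functions with $g(\mathbf{x})=f(\mathbf{x}\oplus\mathbf{u})$ for all $\mathbf{x}$, for some $\mathbf{u}\in\mathbb{F}_2^n$. Then for all $\mathbf{x}\in\mathbb{F}_2^n$, $$(g\oplus s_2)(\mathbf{x})=\left(f\oplus s_2\oplus\mathbb{L}_{\mathbf{u}}\oplus s_2(\mathbf{u})\right)(\mathbf{x}\oplus\mathbf{u}),$$ (where $g\oplus s_2$ and $f\oplus s_2\oplus\mathbb{L}_{\mathbf{u}}\oplus s_2(\mathbf{u})$ are negabent functions), and the duals satisfy $\tilde g(\mathbf{x})=\tilde f(\mathbf{x})\oplus\mathbf{u}\cdot\mathbf{x}$ for all $\mathbf{x}$.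
   Context: $\mathbf{x}\cdot\mathbf{y}=\bigoplus_ix_iy_i$. $s_2(\mathbf{x})=\bigoplus_{1\le i<j\le n}x_ix_j$ is the quadratic symmetric Boolean function. $\mathbb{L}_{\mathbf{u}}(\mathbf{x})=\bigoplus_{i=1}^n x_i\left(\bigoplus_{j\neq i}u_j\right)$. Walsh–Hadamard transform $W_f(\boldsymbol{\omega})=2^{-n/2}\sum_{\mathbf{x}}(-1)^{f(\mathbf{x})\oplus\mathbf{x}\cdot\boldsymbol{\omega}}$; $f$ is bent if $W_f(\boldsymbol{\omega})=\pm1$ for all $\boldsymbol{\omega}$, and its dual $\tilde f$ satisfies $(-1)^{\tilde f(\mathbf{x})}=W_f(\mathbf{x})$. Nega-Hadamard transform $N_f(\boldsymbol{\omega})=2^{-n/2}\sum_{\mathbf{x}}(-1)^{f(\mathbf{x})\oplus\mathbf{x}\cdot\boldsymbol{\omega}}i^{wt(\mathbf{x})}$ ($wt$ = Hamming weight); $f$ is negabent if $|N_f(\boldsymbol{\omega})|=1$ for all $\boldsymbol{\omega}$. *)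

theory Defs
  imports Complex_Main
begin

text \<open>Vectors of F_2^n are represented as functions nat => bool supported on {0..<n};
  F_2 is bool, with addition (xor) being (\<noteq>) and multiplication being conjunction.
  Boolean functions are maps (nat => bool) => bool, only their values on
  the carrier vecs n matter.\<close>

definition vecs :: "nat \<Rightarrow> (nat \<Rightarrow> bool) set" where
  "vecs n = {x. \<forall>i. n \<le> i \<longrightarrow> \<not> x i}"

definition vxor :: "(nat \<Rightarrow> bool) \<Rightarrow> (nat \<Rightarrow> bool) \<Rightarrow> (nat \<Rightarrow> bool)" where
  "vxor x y = (\<lambda>i. x i \<noteq> y i)"

definition dotp :: "nat \<Rightarrow> (nat \<Rightarrow> bool) \<Rightarrow> (nat \<Rightarrow> bool) \<Rightarrow> bool" where
  "dotp n x y = odd (card {i. i < n \<and> x i \<and> y i})"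

definition s2 :: "nat \<Rightarrow> (nat \<Rightarrow> bool) \<Rightarrow> bool" where
  "s2 n x = odd (card {(i, j). i < j \<and> j < n \<and> x i \<and> x j})"

definition Lu :: "nat \<Rightarrow> (nat \<Rightarrow> bool) \<Rightarrow> (nat \<Rightarrow> bool) \<Rightarrow> bool" where
  "Lu n u x = odd (card {i. i < n \<and> x i \<and> odd (card {j. j < n \<and> j \<noteq> i \<and> u j})})"

definition sgn2 :: "bool \<Rightarrow> real" where
  "sgn2 b = (if b then -1 else 1)"

definition hw :: "nat \<Rightarrow> (nat \<Rightarrow> bool) \<Rightarrow> nat" where
  "hw n x = card {i. i < n \<and> x i}"

definition walsh :: "nat \<Rightarrow> ((nat \<Rightarrow> bool) \<Rightarrow> bool) \<Rightarrow> (nat \<Rightarrow> bool) \<Rightarrow> real" where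
  "walsh n f w = 2 powr (- real n / 2) * (\<Sum>x\<in>vecs n. sgn2 (f x \<noteq> dotp n x w))"

definition bent :: "nat \<Rightarrow> ((nat \<Rightarrow> bool) \<Rightarrow> bool) \<Rightarrow> bool" where
  "bent n f = (\<forall>w\<in>vecs n. walsh n f w = 1 \<or> walsh n f w = -1)"

text \<open>dual: (-1)^{dual f x} = W_f(x) (meaningful for bent f)\<close>
definition dual :: "nat \<Rightarrow> ((nat \<Rightarrow> bool) \<Rightarrow> bool) \<Rightarrow> (nat \<Rightarrow> bool) \<Rightarrow> bool" where
  "dual n f x = (walsh n f x = -1)"

definition nega :: "nat \<Rightarrow> ((nat \<Rightarrow> bool) \<Rightarrow> bool) \<Rightarrow> (nat \<Rightarrow> bool) \<Rightarrow> complex" where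
  "nega n f w = complex_of_real (2 powr (- real n / 2)) *
     (\<Sum>x\<in>vecs n. complex_of_real (sgn2 (f x \<noteq> dotp n x w)) * \<i> ^ hw n x)"

definition negabent :: "nat \<Rightarrow> ((nat \<Rightarrow> bool) \<Rightarrow> bool) \<Rightarrow> bool" where
  "negabent n f = (\<forall>w\<in>vecs n. cmod (nega n f w) = 1)"

end

theory Submission
  imports Defs
begin

text \<open>Since \<open>s\<^sub>2(x) = wt(x) choose 2 mod 2\<close>, we have
  \<open>i^wt(x) = (-1)^s\<^sub>2(x) i^(wt(x) mod 2)\<close>, and \<open>i^(wt(x) mod 2)\<close> is a combination of
  \<open>1\<close> and \<open>(-1)^(x\<cdot>1)\<close>. Hence \<open>N\<^sub>h\<^sub>\<oplus>\<^sub>s\<^sub>2(w) = (1+i)/2 W\<^sub>h(w) + (1-i)/2 W\<^sub>h(w\<oplus>1)\<close>,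
  which has modulus 1 when \<open>h\<close> is bent. Translating \<open>f\<close> by \<open>u\<close> multiplies \<open>W\<^sub>f(w)\<close> by
  \<open>(-1)^(u\<cdot>w)\<close>, which gives the dual relation. Finally
  \<open>s\<^sub>2(y\<oplus>u) = s\<^sub>2(y) \<oplus> s\<^sub>2(u) \<oplus> L\<^sub>u(y)\<close>, since the cross term \<open>\<Oplus>\<^sub>i\<^sub>\<noteq>\<^sub>j y\<^sub>iu\<^sub>j\<close> is
  the linear function \<open>L\<^sub>u\<close>; this gives the identity, and \<open>f \<oplus> L\<^sub>u \<oplus> s\<^sub>2(u)\<close> is again bent.\<close>

lemma card_less_Suc_if:
  "card {i. i < Suc n \<and> P i} = card {i. i < n \<and> P i} + (if P n then 1 else 0)"
proof -
  have "{i. i < Suc n \<and> P i} = {i. i < n \<and> P i} \<union> (if P n then {n} else {})"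
    by (auto simp: less_Suc_eq)
  then show ?thesis by (cases "P n") auto
qed

lemma hw_Suc: "hw (Suc n) x = hw n x + (if x n then 1 else 0)"
  unfolding hw_def by (rule card_less_Suc_if)

lemma dotp_Suc: "dotp (Suc n) x y = (dotp n x y \<noteq> (x n \<and> y n))"
  unfolding dotp_def using card_less_Suc_if[of n "\<lambda>i. x i \<and> y i"] by auto

lemma s2_Suc: "s2 (Suc n) x = (s2 n x \<noteq> (x n \<and> odd (hw n x)))"
proof -
  let ?A = "{(i, j). i < j \<and> j < n \<and> x i \<and> x j}"
  let ?B = "if x n then (\<lambda>i. (i, n)) ` {i. i < n \<and> x i} else {}"
  have split: "{(i, j). i < j \<and> j < Suc n \<and> x i \<and> x j} = ?A \<union> ?B"
    by (auto simp: less_Suc_eq)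
  have "finite ?A"
    by (rule finite_subset[of _ "{..<n} \<times> {..<n}"]) auto
  moreover have "card ?B = (if x n then hw n x else 0)"
    by (auto simp: hw_def card_image inj_on_def)
  ultimately have "card {(i, j). i < j \<and> j < Suc n \<and> x i \<and> x j} = card ?A + (if x n then hw n x else 0)"
    unfolding split by (subst card_Un_disjoint) auto
  then show ?thesis unfolding s2_def by auto
qed

lemma dotp_commute: "dotp n x y = dotp n y x"
  unfolding dotp_def by (simp add: conj_commute conj_left_commute)

lemma vxor_apply: "vxor x y i = (x i \<noteq> y i)"
  by (simp add: vxor_def)

lemma dotp_vxor_right: "dotp n x (vxor a b) = (dotp n x a \<noteq> dotp n x b)"
  by (induction n) (simp add: dotp_def, auto simp: dotp_Suc vxor_apply)

lemma dotp_vxor_left: "dotp n (vxor a b) y = (dotp n a y \<noteq> dotp n b y)"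
  using dotp_vxor_right dotp_commute by metis

lemma dotp_xor_const_right: "dotp n y (\<lambda>i. c \<noteq> u i) = ((c \<and> odd (hw n y)) \<noteq> dotp n y u)"
  by (induction n) (simp add: dotp_def hw_def, auto simp: dotp_Suc hw_Suc)

lemma odd_hw_vxor: "odd (hw n (vxor x y)) = (odd (hw n x) \<noteq> odd (hw n y))"
  by (induction n) (simp add: hw_def, auto simp: hw_Suc vxor_apply)

lemma vxor_cancel_right: "vxor (vxor x u) u = x"
  by (auto simp: vxor_def fun_eq_iff)

lemma vxor_in_vecs: "x \<in> vecs n \<Longrightarrow> u \<in> vecs n \<Longrightarrow> vxor x u \<in> vecs n"
  by (auto simp: vecs_def vxor_def)

lemma sum_vecs_vxor:
  assumes "u \<in> vecs n"
  shows "(\<Sum>x\<in>vecs n. F (vxor x u)) = (\<Sum>x\<in>vecs n. F x)"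
  by (rule sum.reindex_bij_witness[where i="\<lambda>x. vxor x u" and j="\<lambda>x. vxor x u"])
     (auto simp: vxor_in_vecs assms vxor_cancel_right)

lemma bent_walsh_cases: "bent n f \<Longrightarrow> w \<in> vecs n \<Longrightarrow> walsh n f w = 1 \<or> walsh n f w = -1"
  by (simp add: bent_def)

lemma walsh_xor_affine:
  "walsh n (\<lambda>x. (f x \<noteq> dotp n x v) \<noteq> c) w = sgn2 c * walsh n f (vxor w v)"
proof -
  have "sgn2 (((f x \<noteq> dotp n x v) \<noteq> c) \<noteq> dotp n x w) = sgn2 c * sgn2 (f x \<noteq> dotp n x (vxor w v))" for x
    by (auto simp: dotp_vxor_right sgn2_def)
  then show ?thesis
    unfolding walsh_def by (simp add: sum_distrib_left mult_ac)
qed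

lemma bent_xor_affine:
  assumes "bent n f" "v \<in> vecs n"
  shows "bent n (\<lambda>x. (f x \<noteq> dotp n x v) \<noteq> c)"
  unfolding bent_def walsh_xor_affine
  using bent_walsh_cases[OF assms(1) vxor_in_vecs[OF _ assms(2)]] by (auto simp: sgn2_def)

lemma walsh_translate:
  assumes "u \<in> vecs n" "\<forall>x\<in>vecs n. g x = f (vxor x u)"
  shows "walsh n g w = sgn2 (dotp n u w) * walsh n f w"
proof -
  have "(\<Sum>x\<in>vecs n. sgn2 (g x \<noteq> dotp n x w)) = (\<Sum>x\<in>vecs n. sgn2 (f (vxor x u) \<noteq> dotp n x w))"
    using assms(2) by (intro sum.cong) auto
  also have "\<dots> = (\<Sum>x\<in>vecs n. sgn2 (f x \<noteq> dotp n (vxor x u) w))"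
    using sum_vecs_vxor[OF assms(1), of "\<lambda>x. sgn2 (f x \<noteq> dotp n (vxor x u) w)"]
    by (simp add: vxor_cancel_right)
  also have "\<dots> = (\<Sum>x\<in>vecs n. sgn2 (dotp n u w) * sgn2 (f x \<noteq> dotp n x w))"
    by (intro sum.cong refl) (auto simp: dotp_vxor_left sgn2_def)
  finally show ?thesis
    unfolding walsh_def by (simp add: sum_distrib_left mult_ac)
qed

lemma dual_translate:
  assumes "bent n f" "u \<in> vecs n" "\<forall>x\<in>vecs n. g x = f (vxor x u)" "x \<in> vecs n"
  shows "dual n g x = (dual n f x \<noteq> dotp n u x)"
  using walsh_translate[OF assms(2,3)] bent_walsh_cases[OF assms(1,4)]
  by (auto simp: dual_def sgn2_def)

lemma i_pow_hw:
  "\<i> ^ hw n x = complex_of_real (sgn2 (s2 n x)) * (if odd (hw n x) then \<i> else 1)"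
proof (induction n)
  case 0
  then show ?case by (simp add: hw_def s2_def sgn2_def)
next
  case (Suc n)
  then show ?case
    by (cases "x n"; cases "odd (hw n x)"; cases "s2 n x") (auto simp: hw_Suc s2_Suc sgn2_def)
qed

definition ones :: "nat \<Rightarrow> nat \<Rightarrow> bool" where
  "ones n = (\<lambda>i. i < n)"

lemma ones_in_vecs: "ones n \<in> vecs n"
  by (simp add: ones_def vecs_def)

lemma dotp_ones: "dotp n x (ones n) = odd (hw n x)"
proof -
  have "{i. i < n \<and> x i \<and> i < n} = {i. i < n \<and> x i}" by blast
  then show ?thesis unfolding dotp_def hw_def ones_def by simp
qed

lemma nega_xor_s2:
  "nega n (\<lambda>x. h x \<noteq> s2 n x) w
     = (1 + \<i>) / 2 * complex_of_real (walsh n h w)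
     + (1 - \<i>) / 2 * complex_of_real (walsh n h (vxor w (ones n)))"
proof -
  let ?a = "(1 + \<i>) / 2" and ?b = "(1 - \<i>) / 2"
  let ?c = "complex_of_real (2 powr (- real n / 2))"
  have "complex_of_real (sgn2 ((h x \<noteq> s2 n x) \<noteq> dotp n x w)) * \<i> ^ hw n x
     = ?a * complex_of_real (sgn2 (h x \<noteq> dotp n x w))
       + ?b * complex_of_real (sgn2 (h x \<noteq> dotp n x (vxor w (ones n))))" for x
    unfolding i_pow_hw dotp_vxor_right dotp_ones
    by (cases "odd (hw n x)"; cases "h x"; cases "s2 n x"; cases "dotp n x w")
       (simp_all add: sgn2_def field_simps)
  then have "nega n (\<lambda>x. h x \<noteq> s2 n x) w
      = ?c * (\<Sum>x\<in>vecs n. ?a * complex_of_real (sgn2 (h x \<noteq> dotp n x w))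
          + ?b * complex_of_real (sgn2 (h x \<noteq> dotp n x (vxor w (ones n)))))"
    unfolding nega_def by simp
  also have "\<dots> = ?a * (?c * (\<Sum>x\<in>vecs n. complex_of_real (sgn2 (h x \<noteq> dotp n x w))))
      + ?b * (?c * (\<Sum>x\<in>vecs n. complex_of_real (sgn2 (h x \<noteq> dotp n x (vxor w (ones n))))))"
    by (simp add: sum.distrib sum_distrib_left algebra_simps)
  finally show ?thesis
    unfolding walsh_def by simp
qed

lemma cmod_half_one_plus_minus_i:
  fixes a b :: real
  assumes "a = 1 \<or> a = -1" "b = 1 \<or> b = -1"
  shows "cmod ((1 + \<i>) / 2 * complex_of_real a + (1 - \<i>) / 2 * complex_of_real b) = 1"
  using assms by (auto simp: field_simps)

lemma bent_imp_negabent_xor_s2: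
  assumes "bent n h"
  shows "negabent n (\<lambda>x. h x \<noteq> s2 n x)"
  unfolding negabent_def nega_xor_s2
proof
  fix w assume "w \<in> vecs n"
  then show "cmod ((1 + \<i>) / 2 * complex_of_real (walsh n h w)
      + (1 - \<i>) / 2 * complex_of_real (walsh n h (vxor w (ones n)))) = 1"
    using bent_walsh_cases[OF assms] vxor_in_vecs[OF _ ones_in_vecs]
    by (intro cmod_half_one_plus_minus_i) blast+
qed

lemma odd_card_others:
  assumes "i < n"
  shows "odd (card {j. j < n \<and> j \<noteq> i \<and> u j}) = (odd (hw n u) \<noteq> u i)"
proof -
  have "{j. j < n \<and> u j} = (if u i then insert i else id) {j. j < n \<and> j \<noteq> i \<and> u j}"
    using assms by auto
  then show ?thesis
    unfolding hw_def by (cases "u i") auto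
qed

lemma Lu_eq_dotp: "Lu n u y = dotp n y (\<lambda>i. odd (hw n u) \<noteq> u i)"
proof -
  have "{i. i < n \<and> y i \<and> odd (card {j. j < n \<and> j \<noteq> i \<and> u j})}
      = {i. i < n \<and> y i \<and> (odd (hw n u) \<noteq> u i)}"
    using odd_card_others by blast
  then show ?thesis
    unfolding Lu_def dotp_def by simp
qed

lemma Lu_linear: "\<exists>v\<in>vecs n. \<forall>y. Lu n u y = dotp n y v"
proof
  let ?v = "\<lambda>i. i < n \<and> (odd (hw n u) \<noteq> u i)"
  show "?v \<in> vecs n" by (simp add: vecs_def)
  show "\<forall>y. Lu n u y = dotp n y ?v"
    unfolding Lu_eq_dotp dotp_def by (simp add: conj_commute conj_left_commute)
qed

lemma s2_vxor_parity:
  "s2 n (vxor y u) = (((s2 n y \<noteq> s2 n u) \<noteq> (odd (hw n u) \<and> odd (hw n y))) \<noteq> dotp n y u)"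
proof (induction n)
  case 0
  then show ?case by (simp add: hw_def s2_def dotp_def)
next
  case (Suc n)
  have "vxor y u n = (y n \<noteq> u n)" by (rule vxor_apply)
  then show ?case
    using Suc.IH odd_hw_vxor[of n y u] by (simp add: s2_Suc hw_Suc dotp_Suc) argo
qed

lemma s2_vxor: "s2 n (vxor y u) = ((s2 n y \<noteq> s2 n u) \<noteq> Lu n u y)"
  unfolding s2_vxor_parity Lu_eq_dotp dotp_xor_const_right by argo

theorem lemma3:
  fixes n :: nat and f g :: "(nat \<Rightarrow> bool) \<Rightarrow> bool" and u :: "nat \<Rightarrow> bool"
  assumes "even n"
    and "bent n f" and "bent n g"
    and "u \<in> vecs n"
    and "\<forall>x\<in>vecs n. g x = f (vxor x u)"
  shows "(\<forall>x\<in>vecs n. (g x \<noteq> s2 n x) =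
            ((((f (vxor x u) \<noteq> s2 n (vxor x u)) \<noteq> Lu n u (vxor x u)) \<noteq> s2 n u)))
    \<and> negabent n (\<lambda>x. g x \<noteq> s2 n x)
    \<and> negabent n (\<lambda>x. ((f x \<noteq> s2 n x) \<noteq> Lu n u x) \<noteq> s2 n u)
    \<and> (\<forall>x\<in>vecs n. dual n g x = (dual n f x \<noteq> dotp n u x))"
proof -
  have identity: "(g x \<noteq> s2 n x) =
      ((((f (vxor x u) \<noteq> s2 n (vxor x u)) \<noteq> Lu n u (vxor x u)) \<noteq> s2 n u))"
    if "x \<in> vecs n" for x
  proof -
    have "g x = f (vxor x u)" using assms(5) that by blast
    moreover have "s2 n x = ((s2 n (vxor x u) \<noteq> s2 n u) \<noteq> Lu n u (vxor x u))"
      using s2_vxor[of n "vxor x u" u] by (simp only: vxor_cancel_right)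
    ultimately show ?thesis by argo
  qed
  obtain v where v: "v \<in> vecs n" and Lu_v: "\<And>y. Lu n u y = dotp n y v"
    using Lu_linear by blast
  have "(\<lambda>x. ((f x \<noteq> s2 n x) \<noteq> Lu n u x) \<noteq> s2 n u)
      = (\<lambda>x. ((f x \<noteq> dotp n x v) \<noteq> s2 n u) \<noteq> s2 n x)"
    unfolding Lu_v by (rule ext) argo
  then have "negabent n (\<lambda>x. ((f x \<noteq> s2 n x) \<noteq> Lu n u x) \<noteq> s2 n u)"
    using bent_imp_negabent_xor_s2[OF bent_xor_affine[OF assms(2) v]] by simp
  then show ?thesis
    using identity bent_imp_negabent_xor_s2[OF assms(3)] dual_translate[OF assms(2,4,5)]
    by blast
qed

end
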